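(* Let $n\in\mathbb{N}$, $p<1$ and $M\in(0,\frac1n)$. Then there exists $c>0$ such that $$\sum_{i=1}^n\frac{a_i^2+a_ib_i}{|a_i+b_i|^p}\ge c|a|^{2-p}$$ for all $a,b\in\mathbb{R}^n$ satisfying $|b|\le M|a|$.
   Context: $|\cdot|$ is the Euclidean norm. Each summand equals $a_i(a_i+b_i)|a_i+b_i|^{-p}$ and is understood to be $0$ when $a_i+b_i=0$. *)

theory Defs
  imports "HOL-Analysis.Analysis"
begin

end

theory Submission
  imports Defs
begin

(* Each summand equals x sgn(x + y) |x + y|^(1-p). If |y_i| <= d it is at least -|y_i| d^(1-p),
   and if |y_k| < |x_k| it is at least |x_k| (|x_k| - |y_k|)^(1-p). So when one coordinate
   satisfies |x_k| > B := sum_i |y_i|, taking d = |x_k| - |y_k| gives the lower bound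
   (|x_k| - B)^(2-p) for the whole sum. For |b| <= M |a| choose k with |a_k| = max_i |a_i|;
   then |a_k| >= |a| / sqrt n and B <= sqrt n |b| <= sqrt n M |a|, so that
   |a_k| - B >= (1/sqrt n - sqrt n M) |a|, which is positive exactly because n M < 1. *)

lemma summand_eq_sgn_powr:
  fixes x y p :: real
  shows "(x^2 + x * y) / \<bar>x + y\<bar> powr p = x * sgn (x + y) * \<bar>x + y\<bar> powr (1 - p)"
proof (cases "x + y = 0")
  case False
  then have "\<bar>x + y\<bar> powr (1 - p) = \<bar>x + y\<bar> / \<bar>x + y\<bar> powr p"
    by (simp add: powr_diff)
  moreover have "x^2 + x * y = x * sgn (x + y) * \<bar>x + y\<bar>"
    by (simp add: power2_eq_square distrib_left mult.assoc sgn_mult_abs)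
  ultimately show ?thesis by simp
qed simp

lemma summand_ge_dominant:
  fixes x y p :: real
  assumes "p \<le> 1" and "\<bar>y\<bar> < \<bar>x\<bar>"
  shows "\<bar>x\<bar> * (\<bar>x\<bar> - \<bar>y\<bar>) powr (1 - p) \<le> (x^2 + x * y) / \<bar>x + y\<bar> powr p"
proof -
  have "x * sgn (x + y) = \<bar>x\<bar>"
    using assms(2) by (auto simp: sgn_if)
  moreover have "(\<bar>x\<bar> - \<bar>y\<bar>) powr (1 - p) \<le> \<bar>x + y\<bar> powr (1 - p)"
    using assms by (intro powr_mono2) auto
  ultimately show ?thesis
    by (simp add: summand_eq_sgn_powr mult_left_mono)
qed

lemma summand_ge_neg:
  fixes x y d p :: real
  assumes "p \<le> 1" and "\<bar>y\<bar> \<le> d"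
  shows "- (\<bar>y\<bar> * d powr (1 - p)) \<le> (x^2 + x * y) / \<bar>x + y\<bar> powr p"
proof (cases "0 \<le> x * sgn (x + y)")
  case True
  then have "0 \<le> x * sgn (x + y) * \<bar>x + y\<bar> powr (1 - p)"
    by simp
  moreover have "0 \<le> \<bar>y\<bar> * d powr (1 - p)"
    by simp
  ultimately show ?thesis
    unfolding summand_eq_sgn_powr by linarith
next
  case False
  \<comment> \<open>x and x + y have opposite signs, so \<bar>x\<bar> \<le> \<bar>y\<bar> and \<bar>x + y\<bar> = \<bar>y\<bar> - \<bar>x\<bar>\<close>
  then have sgn: "x * sgn (x + y) = - \<bar>x\<bar>" and "\<bar>x\<bar> \<le> \<bar>y\<bar>" and "\<bar>x + y\<bar> \<le> d"
    using assms(2) by (auto simp: sgn_if split: if_splits)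
  then have "\<bar>x\<bar> * \<bar>x + y\<bar> powr (1 - p) \<le> \<bar>y\<bar> * d powr (1 - p)"
    using assms(1) by (intro mult_mono powr_mono2) auto
  then show ?thesis
    by (simp add: summand_eq_sgn_powr sgn)
qed

lemma sum_summands_ge:
  fixes x y :: "'i \<Rightarrow> real" and p :: real
  assumes "p \<le> 1" and "finite I" and "k \<in> I" and dominant: "(\<Sum>i\<in>I. \<bar>y i\<bar>) < \<bar>x k\<bar>"
  shows "(\<bar>x k\<bar> - (\<Sum>i\<in>I. \<bar>y i\<bar>)) powr (2 - p)
           \<le> (\<Sum>i\<in>I. ((x i)^2 + x i * y i) / \<bar>x i + y i\<bar> powr p)"
proof -
  define f where "f i = ((x i)^2 + x i * y i) / \<bar>x i + y i\<bar> powr p" for i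
  define B where "B = (\<Sum>i\<in>I. \<bar>y i\<bar>)"
  define E where "E = \<bar>x k\<bar> - B"
  define D where "D = \<bar>x k\<bar> - \<bar>y k\<bar>"
  have "\<bar>y k\<bar> \<le> B"
    unfolding B_def using assms(2,3) by (intro member_le_sum) auto
  then have E: "0 < E" and "E \<le> D"
    using dominant by (simp_all add: B_def E_def D_def)
  have small: "\<bar>y i\<bar> \<le> D" if "i \<in> I - {k}" for i
  proof -
    have "\<bar>y i\<bar> + \<bar>y k\<bar> = (\<Sum>j\<in>{i, k}. \<bar>y j\<bar>)"
      using that by simp
    also have "\<dots> \<le> B"
      unfolding B_def using that assms(2,3) by (intro sum_mono2) auto
    finally show ?thesis
      using dominant by (simp add: B_def D_def)
  qed
  have "\<bar>x k\<bar> * D powr (1 - p) \<le> f k"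
    unfolding f_def D_def using assms(1) E \<open>E \<le> D\<close>
    by (intro summand_ge_dominant) (auto simp: D_def)
  moreover have "- (\<Sum>i\<in>I - {k}. \<bar>y i\<bar> * D powr (1 - p)) \<le> (\<Sum>i\<in>I - {k}. f i)"
    unfolding f_def using assms(1) small by (auto simp flip: sum_negf intro: sum_mono summand_ge_neg)
  ultimately have "\<bar>x k\<bar> * D powr (1 - p) - (\<Sum>i\<in>I - {k}. \<bar>y i\<bar> * D powr (1 - p))
          \<le> f k + (\<Sum>i\<in>I - {k}. f i)"
    by linarith
  also have "\<dots> = (\<Sum>i\<in>I. f i)"
    using assms(2,3) by (simp add: sum.remove)
  finally have "D powr (1 - p) * (E + \<bar>y k\<bar>) \<le> (\<Sum>i\<in>I. f i)"
    using assms(2,3) by (simp add: E_def B_def sum.remove algebra_simps flip: sum_distrib_right)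
  moreover have "E powr (1 - p) * E \<le> D powr (1 - p) * (E + \<bar>y k\<bar>)"
    using E \<open>E \<le> D\<close> assms(1) by (intro mult_mono powr_mono2) auto
  moreover have "E powr (2 - p) = E powr (1 - p) * E"
    using E powr_add[of E "1 - p" 1] by simp
  ultimately show ?thesis
    by (simp add: f_def E_def B_def)
qed

lemma infnorm_attained_cart:
  fixes x :: "real ^ 'n"
  obtains k where "infnorm x = \<bar>x $ k\<bar>"
proof -
  have "{\<bar>x $ i\<bar> |i. i \<in> UNIV} = range (\<lambda>i. \<bar>x $ i\<bar>)"
    by blast
  then have "infnorm x = Max (range (\<lambda>i. \<bar>x $ i\<bar>))"
    by (simp add: infnorm_cart cSup_eq_Max)
  also have "\<dots> \<in> range (\<lambda>i. \<bar>x $ i\<bar>)"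
    by (intro Max_in) auto
  finally show ?thesis
    using that by blast
qed

lemma sum_abs_le_sqrt_card_norm_cart:
  fixes x :: "real ^ 'n"
  shows "(\<Sum>i\<in>UNIV. \<bar>x $ i\<bar>) \<le> sqrt CARD('n) * norm x"
  using L2_set_mult_ineq[of "\<lambda>i. \<bar>x $ i\<bar>" "\<lambda>_. 1" UNIV]
  by (simp add: norm_vec_def L2_set_constant mult.commute)

lemma sum_summands_ge_norm_cart:
  fixes a b :: "real ^ 'n" and p M :: real
  assumes "p \<le> 1" and "real CARD('n) * M < 1" and b: "norm b \<le> M * norm a"
  shows "((1 / sqrt CARD('n) - sqrt CARD('n) * M) * norm a) powr (2 - p)
           \<le> (\<Sum>i\<in>UNIV. ((a $ i)^2 + a $ i * b $ i) / \<bar>a $ i + b $ i\<bar> powr p)"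
proof (cases "a = 0")
  case False
  define e where "e = 1 / sqrt CARD('n) - sqrt CARD('n) * M"
  obtain k where k: "infnorm a = \<bar>a $ k\<bar>"
    by (rule infnorm_attained_cart)
  have "norm a / sqrt CARD('n) \<le> \<bar>a $ k\<bar>"
    using norm_le_infnorm[of a] by (simp add: k field_simps)
  moreover have "(\<Sum>i\<in>UNIV. \<bar>b $ i\<bar>) \<le> sqrt CARD('n) * M * norm a"
    using sum_abs_le_sqrt_card_norm_cart[of b] b
    by (simp add: mult.assoc mult_left_mono order_trans)
  ultimately have "e * norm a \<le> \<bar>a $ k\<bar> - (\<Sum>i\<in>UNIV. \<bar>b $ i\<bar>)"
    by (simp add: e_def algebra_simps)
  moreover have "0 < e * norm a"
    using assms(2) False by (simp add: e_def field_simps flip: real_sqrt_mult)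
  ultimately show ?thesis
    using assms(1) unfolding e_def [symmetric]
    by (intro order_trans[OF powr_mono2 sum_summands_ge]) auto
qed (use b in simp)

theorem lemma12:
  fixes p M :: real
  assumes "p < 1" and "0 < M" and "M < 1 / real CARD('n::finite)"
  shows "\<exists>c>0. \<forall>a b :: real ^ 'n. norm b \<le> M * norm a \<longrightarrow>
           (\<Sum>i\<in>UNIV. ((a $ i)^2 + a $ i * b $ i) / \<bar>a $ i + b $ i\<bar> powr p)
             \<ge> c * norm a powr (2 - p)"
proof -
  define e where "e = 1 / sqrt CARD('n) - sqrt CARD('n) * M"
  have nM: "real CARD('n) * M < 1"
    using assms(3) by (simp add: field_simps)
  then have "0 < e"
    by (simp add: e_def field_simps flip: real_sqrt_mult)
  moreover have "e powr (2 - p) * norm a powr (2 - p)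
      \<le> (\<Sum>i\<in>UNIV. ((a $ i)^2 + a $ i * b $ i) / \<bar>a $ i + b $ i\<bar> powr p)"
    if "norm b \<le> M * norm a" for a b :: "real ^ 'n"
    using sum_summands_ge_norm_cart[OF _ nM that, of p] assms(1) \<open>0 < e\<close>
    by (simp add: e_def powr_mult)
  ultimately show ?thesis
    by (intro exI[of _ "e powr (2 - p)"]) auto
qed

end
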